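(* Let $Q=(q_n)_{n\ge1}$ be a basic sequence that is infinite in limit, and let $F_1,F_2$ be $Q$-special sequences. Then $|x_{F_1}-x_{F_2}|\le d(F_1,F_2)$.
   Context: A basic sequence is a sequence $Q=(q_n)_{n\ge1}$ of integers with $q_n\ge 2$; it is infinite in limit if $q_n\to\infty$. $\mathbb{N}$ denotes the positive integers. For each positive integer $j$ let $\nu_j=\min\{N : q_m\ge 2j^2 \text{ for all } m\ge N\}$. Define $l_1=\max(\nu_2-1,1)$ and, recursively for $i\ge 2$, $l_i=\max\big(\min\{k\in\mathbb{N} : l_1+2l_2+\cdots+(i-1)l_{i-1}+ik\ge \nu_{i+1}-1\},1\big)$. Put $L_i=\sum_{j=1}^i jl_j$ (with $L_0=0$). Let $S_Q=\{(a,b,c)\in\mathbb{N}^3 : b\le l_a,\ c\le a\}$ and $\phi_Q(a,b,c)=L_{a-1}+(b-1)a+c$; $\phi_Q$ is a bijection $S_Q\to\mathbb{N}$. A $Q$-special sequence is a family of integers $F=(F_{(a,b,c)})_{(a,b,c)\in S_Q}$ with $F_{(a,b,1)}=0$ for all $(a,b,1)\in S_Q$ and $\frac{F_{(a,b,c)}}{q_{\phi_Q(a,b,c)}}\in\left[\frac{c-1}{a}-\frac{1}{2a^2},\frac{c-1}{a}+\frac{1}{2a^2}\right]$ for $(a,b,c)\in S_Q$ with $c>1$. Let $\Gamma_Q$ be the set of $Q$-special sequences. For $F\in\Gamma_Q$ put $E_{F,n}=F_{\phi_Q^{-1}(n)}$ and $x_F=\sum_{n=1}^\infty \frac{E_{F,n}}{q_1q_2\cdots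 q_n}$. For $F_1\ne F_2$ in $\Gamma_Q$ let $\zeta_{F_1,F_2}=\min\{n : E_{F_1,n}\ne E_{F_2,n}\}$ and define $d(F_1,F_2)=\frac{1}{q_1q_2\cdots q_{\zeta_{F_1,F_2}-1}}$ (empty product equal to $1$); set $d(F,F)=0$. *)

theory Defs
  imports Complex_Main
begin

text \<open>A basic sequence q (indexed from 1; the value q 0 is irrelevant).\<close>
definition basic_seq :: "(nat \<Rightarrow> int) \<Rightarrow> bool" where
  "basic_seq q \<longleftrightarrow> (\<forall>n\<ge>1. q n \<ge> 2)"

definition infinite_in_limit :: "(nat \<Rightarrow> int) \<Rightarrow> bool" where
  "infinite_in_limit q \<longleftrightarrow> filterlim q at_top sequentially"

definition nu :: "(nat \<Rightarrow> int) \<Rightarrow> nat \<Rightarrow> nat" where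
  "nu q j = (LEAST N::nat. N \<ge> 1 \<and> (\<forall>m\<ge>N. q m \<ge> 2 * int j ^ 2))"

definition lnext :: "(nat \<Rightarrow> int) \<Rightarrow> nat \<Rightarrow> nat \<Rightarrow> nat" where
  "lnext q i Lprev =
     (if i = 1 then max (nu q 2 - 1) 1
      else max (LEAST k::nat. k \<ge> 1 \<and> Lprev + i * k \<ge> nu q (i + 1) - 1) 1)"

primrec Lsum :: "(nat \<Rightarrow> int) \<Rightarrow> nat \<Rightarrow> nat" where
  "Lsum q 0 = 0"
| "Lsum q (Suc i) = Lsum q i + Suc i * lnext q (Suc i) (Lsum q i)"

definition lseq :: "(nat \<Rightarrow> int) \<Rightarrow> nat \<Rightarrow> nat" where
  "lseq q i = lnext q i (Lsum q (i - 1))"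

definition SQ :: "(nat \<Rightarrow> int) \<Rightarrow> (nat \<times> nat \<times> nat) set" where
  "SQ q = {(a, b, c). a \<ge> 1 \<and> b \<ge> 1 \<and> c \<ge> 1 \<and> b \<le> lseq q a \<and> c \<le> a}"

definition phiQ :: "(nat \<Rightarrow> int) \<Rightarrow> nat \<times> nat \<times> nat \<Rightarrow> nat" where
  "phiQ q t = (case t of (a, b, c) \<Rightarrow> Lsum q (a - 1) + (b - 1) * a + c)"

definition phiQ_inv :: "(nat \<Rightarrow> int) \<Rightarrow> nat \<Rightarrow> nat \<times> nat \<times> nat" where
  "phiQ_inv q n = (THE t. t \<in> SQ q \<and> phiQ q t = n)"

text \<open>Q-special sequences: families indexed by S_Q, represented as functions on triples
  (values outside S_Q are irrelevant).\<close>
definition special_seq :: "(nat \<Rightarrow> int) \<Rightarrow> (nat \<times> nat \<times> nat \<Rightarrow> int) \<Rightarrow> bool" where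
  "special_seq q F \<longleftrightarrow>
     (\<forall>a b. (a, b, 1) \<in> SQ q \<longrightarrow> F (a, b, 1) = 0) \<and>
     (\<forall>a b c. (a, b, c) \<in> SQ q \<and> c > 1 \<longrightarrow>
        real_of_int (F (a, b, c)) / real_of_int (q (phiQ q (a, b, c)))
          \<in> {real (c - 1) / real a - 1 / (2 * real a ^ 2) ..
              real (c - 1) / real a + 1 / (2 * real a ^ 2)})"

definition GammaQ :: "(nat \<Rightarrow> int) \<Rightarrow> (nat \<times> nat \<times> nat \<Rightarrow> int) set" where
  "GammaQ q = {F. special_seq q F}"

definition EF :: "(nat \<Rightarrow> int) \<Rightarrow> (nat \<times> nat \<times> nat \<Rightarrow> int) \<Rightarrow> nat \<Rightarrow> int" where
  "EF q F n = F (phiQ_inv q n)"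

definition xF :: "(nat \<Rightarrow> int) \<Rightarrow> (nat \<times> nat \<times> nat \<Rightarrow> int) \<Rightarrow> real" where
  "xF q F = (\<Sum>n. real_of_int (EF q F (n + 1)) / (\<Prod>k\<in>{1..n+1}. real_of_int (q k)))"

definition zetaF :: "(nat \<Rightarrow> int) \<Rightarrow> (nat \<times> nat \<times> nat \<Rightarrow> int) \<Rightarrow> (nat \<times> nat \<times> nat \<Rightarrow> int) \<Rightarrow> nat" where
  "zetaF q F1 F2 = (LEAST n. n \<ge> 1 \<and> EF q F1 n \<noteq> EF q F2 n)"

text \<open>d(F1,F2); F1 = F2 as families indexed by S_Q iff all E_{F,n} (n >= 1) agree.\<close>
definition dF :: "(nat \<Rightarrow> int) \<Rightarrow> (nat \<times> nat \<times> nat \<Rightarrow> int) \<Rightarrow> (nat \<times> nat \<times> nat \<Rightarrow> int) \<Rightarrow> real" where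
  "dF q F1 F2 =
     (if (\<forall>t\<in>SQ q. F1 t = F2 t) then 0
      else 1 / (\<Prod>k\<in>{1..<zetaF q F1 F2}. real_of_int (q k)))"

end

theory Submission imports Defs begin

text \<open>Each entry satisfies \<open>0 \<le> E\<^sub>F\<^sub>,\<^sub>n \<le> q\<^sub>n - 1\<close>: this is immediate for \<open>c = 1\<close>, and for
  \<open>c > 1\<close> the interval prescribed for \<open>E\<^sub>F\<^sub>,\<^sub>n / q\<^sub>n\<close> lies strictly inside \<open>(0, 1)\<close>.
  So \<open>x\<^sub>F\<^sub>1\<close> and \<open>x\<^sub>F\<^sub>2\<close> are Cantor series with admissible digits which agree before
  position \<open>\<zeta>\<close>, and their difference is bounded by the maximal tail
  \<open>\<Sum>\<^sub>n\<^sub>\<ge>\<^sub>\<zeta> (q\<^sub>n - 1)/(q\<^sub>1\<cdots>q\<^sub>n)\<close>, which telescopes to \<open>1/(q\<^sub>1\<cdots>q\<^sub>\<zeta>\<^sub>-\<^sub>1)\<close>.\<close>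

definition cantor_prod :: "(nat \<Rightarrow> int) \<Rightarrow> nat \<Rightarrow> real" where
  "cantor_prod q n = (\<Prod>k\<in>{1..n}. real_of_int (q k))"

definition cantor_term :: "(nat \<Rightarrow> int) \<Rightarrow> (nat \<Rightarrow> int) \<Rightarrow> nat \<Rightarrow> real" where
  "cantor_term q E n = real_of_int (E (n + 1)) / cantor_prod q (n + 1)"

definition admissible_digits :: "(nat \<Rightarrow> int) \<Rightarrow> (nat \<Rightarrow> int) \<Rightarrow> bool" where
  "admissible_digits q E \<longleftrightarrow> (\<forall>n\<ge>1. 0 \<le> E n \<and> E n \<le> q n - 1)"

lemma cantor_prod_Suc: "cantor_prod q (Suc n) = cantor_prod q n * real_of_int (q (Suc n))"
  unfolding cantor_prod_def by (simp add: prod.cl_ivl_Suc)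

lemma cantor_prod_ge_power:
  assumes "basic_seq q" shows "cantor_prod q n \<ge> 2 ^ n"
proof (induction n)
  case 0
  then show ?case by (simp add: cantor_prod_def)
next
  case (Suc n)
  have "real_of_int (q (Suc n)) \<ge> 2" using assms by (auto simp: basic_seq_def)
  moreover have "0 \<le> cantor_prod q n" using Suc.IH zero_le_power[of "2::real" n] by linarith
  ultimately have "2 ^ n * 2 \<le> cantor_prod q n * real_of_int (q (Suc n))"
    using Suc.IH by (intro mult_mono) auto
  then show ?case by (simp add: cantor_prod_Suc mult.commute)
qed

lemma cantor_prod_pos: "basic_seq q \<Longrightarrow> cantor_prod q n > 0"
  using cantor_prod_ge_power[of q n] by (smt (verit) zero_less_power)

lemma inverse_cantor_prod_LIMSEQ:
  assumes "basic_seq q" shows "(\<lambda>n. 1 / cantor_prod q n) \<longlonglongrightarrow> 0"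
proof (rule tendsto_sandwich[of "\<lambda>n. 0" _ _ "\<lambda>n. (1/2::real) ^ n"])
  show "\<forall>\<^sub>F n in sequentially. 1 / cantor_prod q n \<le> (1/2) ^ n"
    using cantor_prod_ge_power[OF assms] cantor_prod_pos[OF assms]
    by (auto simp: power_one_over intro!: always_eventually frac_le)
  show "\<forall>\<^sub>F n in sequentially. 0 \<le> 1 / cantor_prod q n"
    using cantor_prod_pos[OF assms] by (auto intro!: always_eventually less_imp_le)
  show "(\<lambda>n. (1/2::real) ^ n) \<longlonglongrightarrow> 0" by (rule LIMSEQ_power_zero) simp
qed simp

text \<open>The series with maximal digits \<open>q\<^sub>n - 1\<close> from position \<open>m + 1\<close> on; it telescopes since \<open>(q\<^sub>n - 1)/(q\<^sub>1\<cdots>q\<^sub>n) = 1/(q\<^sub>1\<cdots>q\<^sub>n\<^sub>-\<^sub>1) - 1/(q\<^sub>1\<cdots>q\<^sub>n)\<close>.\<close>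
definition max_tail_term :: "(nat \<Rightarrow> int) \<Rightarrow> nat \<Rightarrow> nat \<Rightarrow> real" where
  "max_tail_term q m n =
     (if m \<le> n then real_of_int (q (n + 1) - 1) / cantor_prod q (n + 1) else 0)"

lemma max_tail_sums:
  assumes q: "basic_seq q" shows "max_tail_term q m sums (1 / cantor_prod q m)"
proof -
  define G where "G n = 1 / cantor_prod q (max m n)" for n
  have "(\<lambda>n. 1 / cantor_prod q n) \<longlonglongrightarrow> 0" by (rule inverse_cantor_prod_LIMSEQ[OF q])
  moreover have "\<forall>\<^sub>F n in sequentially. 1 / cantor_prod q n = G n"
    unfolding G_def eventually_sequentially by (auto intro: exI[of _ m])
  ultimately have "G \<longlonglongrightarrow> 0" by (rule Lim_transform_eventually)
  then have "(\<lambda>n. G n - G (Suc n)) sums (G 0 - 0)" by (rule telescope_sums')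
  moreover have "G n - G (Suc n) = max_tail_term q m n" for n
  proof (cases "m \<le> n")
    case True
    have "q (Suc n) \<ge> 2" using q by (simp add: basic_seq_def)
    then show ?thesis using True cantor_prod_pos[OF q, of n]
      by (simp add: G_def max_tail_term_def cantor_prod_Suc max_absorb2 le_Suc_eq field_simps)
  next
    case False
    then show ?thesis by (simp add: G_def max_tail_term_def max_absorb1)
  qed
  ultimately show ?thesis by (simp add: G_def)
qed

lemma max_tail_summable: "basic_seq q \<Longrightarrow> summable (max_tail_term q m)"
  using max_tail_sums by (rule sums_summable)

lemma admissible_digits_real:
  assumes "admissible_digits q E" "1 \<le> n"
  shows "0 \<le> real_of_int (E n) \<and> real_of_int (E n) \<le> real_of_int (q n - 1)"
  using assms unfolding admissible_digits_def by (simp only: of_int_le_iff of_int_0_le_iff)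

lemma abs_cantor_term_le:
  assumes q: "basic_seq q" and E: "admissible_digits q E"
  shows "\<bar>cantor_term q E n\<bar> \<le> max_tail_term q 0 n"
  using admissible_digits_real[OF E, of "n + 1"] cantor_prod_pos[OF q, of "n + 1"]
  by (auto simp: cantor_term_def max_tail_term_def intro!: divide_right_mono)

lemma cantor_term_summable:
  assumes "basic_seq q" "admissible_digits q E" shows "summable (cantor_term q E)"
proof (rule summable_rabs_cancel)
  show "summable (\<lambda>n. \<bar>cantor_term q E n\<bar>)"
    by (rule summable_rabs_comparison_test[OF _ max_tail_summable[OF assms(1)]])
      (use abs_cantor_term_le[OF assms] in auto)
qed

lemma abs_cantor_term_diff_le:
  assumes q: "basic_seq q" and E1: "admissible_digits q E1" and E2: "admissible_digits q E2"
    and agree: "\<And>k. 1 \<le> k \<Longrightarrow> k \<le> m \<Longrightarrow> E1 k = E2 k"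
  shows "\<bar>cantor_term q E1 n - cantor_term q E2 n\<bar> \<le> max_tail_term q m n"
proof (cases "m \<le> n")
  case True
  have "\<bar>real_of_int (E1 (n + 1)) - real_of_int (E2 (n + 1))\<bar> \<le> real_of_int (q (n + 1) - 1)"
    using admissible_digits_real[OF E1, of "n + 1"] admissible_digits_real[OF E2, of "n + 1"]
    by linarith
  then have "\<bar>real_of_int (E1 (n + 1)) - real_of_int (E2 (n + 1))\<bar> / cantor_prod q (n + 1)
      \<le> real_of_int (q (n + 1) - 1) / cantor_prod q (n + 1)"
    using cantor_prod_pos[OF q, of "n + 1"] by (intro divide_right_mono) auto
  then show ?thesis using True cantor_prod_pos[OF q, of "n + 1"]
    by (simp add: cantor_term_def max_tail_term_def diff_divide_distrib[symmetric] abs_divide)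
next
  case False
  then show ?thesis using agree[of "n + 1"] by (simp add: cantor_term_def max_tail_term_def)
qed

lemma cantor_series_diff_le:
  assumes q: "basic_seq q" and E1: "admissible_digits q E1" and E2: "admissible_digits q E2"
    and agree: "\<And>k. 1 \<le> k \<Longrightarrow> k \<le> m \<Longrightarrow> E1 k = E2 k"
  shows "\<bar>suminf (cantor_term q E1) - suminf (cantor_term q E2)\<bar> \<le> 1 / cantor_prod q m"
proof -
  have diff_le: "\<bar>cantor_term q E1 n - cantor_term q E2 n\<bar> \<le> max_tail_term q m n" for n
    by (intro abs_cantor_term_diff_le[OF q E1 E2] agree)
  have abs_summable: "summable (\<lambda>n. \<bar>cantor_term q E1 n - cantor_term q E2 n\<bar>)"
    by (rule summable_rabs_comparison_test[OF _ max_tail_summable[OF q]]) (use diff_le in auto)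
  have "\<bar>suminf (cantor_term q E1) - suminf (cantor_term q E2)\<bar>
      = \<bar>\<Sum>n. cantor_term q E1 n - cantor_term q E2 n\<bar>"
    using suminf_diff[OF cantor_term_summable[OF q E1] cantor_term_summable[OF q E2]] by simp
  also have "\<dots> \<le> (\<Sum>n. \<bar>cantor_term q E1 n - cantor_term q E2 n\<bar>)"
    by (rule summable_rabs[OF abs_summable])
  also have "\<dots> \<le> suminf (max_tail_term q m)"
    by (rule suminf_le[OF diff_le abs_summable max_tail_summable[OF q]])
  also have "\<dots> = 1 / cantor_prod q m"
    by (rule sums_unique[symmetric, OF max_tail_sums[OF q]])
  finally show ?thesis .
qed

lemma lnext_pos: "0 < lnext q i L"
  by (simp add: lnext_def less_max_iff_disj)

lemma lseq_ge_1: "1 \<le> lseq q i"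
  unfolding lseq_def using lnext_pos[of q i "Lsum q (i - 1)"] by linarith

lemma Lsum_eq: "1 \<le> a \<Longrightarrow> Lsum q a = Lsum q (a - 1) + a * lseq q a"
  by (cases a) (auto simp: lseq_def)

lemma strict_mono_Lsum: "strict_mono (Lsum q)"
  unfolding strict_mono_Suc_iff using lnext_pos by simp

lemma Lsum_ge: "a \<le> Lsum q a"
  using strict_mono_Lsum by (rule strict_mono_imp_increasing)

text \<open>The triples with first coordinate \<open>a\<close> fill the block \<open>(L\<^sub>a\<^sub>-\<^sub>1, L\<^sub>a]\<close>, ordered
  lexicographically in \<open>(b, c)\<close>.\<close>
lemma phiQ_in_block:
  assumes "(a, b, c) \<in> SQ q"
  shows "Lsum q (a - 1) < phiQ q (a, b, c) \<and> phiQ q (a, b, c) \<le> Lsum q a"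
proof -
  from assms have a: "a \<ge> 1" "b \<ge> 1" "c \<ge> 1" "b \<le> lseq q a" "c \<le> a"
    by (auto simp: SQ_def)
  have "(b - 1) * a \<le> (lseq q a - 1) * a" using a by (intro mult_le_mono1) simp
  moreover have "(lseq q a - 1) * a + a = a * lseq q a"
    using lseq_ge_1[of q a] by (cases "lseq q a") auto
  ultimately have "(b - 1) * a + c \<le> a * lseq q a" using a by linarith
  then show ?thesis using a Lsum_eq[of a q] by (auto simp: phiQ_def)
qed

lemma phiQ_ge_1: "t \<in> SQ q \<Longrightarrow> 1 \<le> phiQ q t"
  using phiQ_in_block[of "fst t" "fst (snd t)" "snd (snd t)" q] by auto

lemma block_unique:
  assumes "1 \<le> a" "1 \<le> a'" "Lsum q (a - 1) < n" "n \<le> Lsum q a"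
    and "Lsum q (a' - 1) < n" "n \<le> Lsum q a'"
  shows "a = a'"
proof (rule ccontr)
  assume "a \<noteq> a'"
  then have "Lsum q a \<le> Lsum q (a' - 1) \<or> Lsum q a' \<le> Lsum q (a - 1)"
    using assms(1,2) by (auto simp: strict_mono_less_eq[OF strict_mono_Lsum])
  then show False using assms by linarith
qed

lemma quotient_remainder_unique:
  fixes a x y x' y' :: nat
  assumes "y < a" "y' < a" "x * a + y = x' * a + y'"
  shows "x = x' \<and> y = y'"
proof -
  have "(x * a + y) div a = x" "(x * a + y) mod a = y"
    "(x' * a + y') div a = x'" "(x' * a + y') mod a = y'" using assms(1,2) by simp_all
  then show ?thesis using assms(3) by metis
qed

lemma inj_on_phiQ: "inj_on (phiQ q) (SQ q)"
proof (rule inj_onI)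
  fix t t'
  assume t: "t \<in> SQ q" and t': "t' \<in> SQ q" and eq: "phiQ q t = phiQ q t'"
  obtain a b c a' b' c' where abc: "t = (a, b, c)" "t' = (a', b', c')" by (cases t, cases t') auto
  note t = t[unfolded abc] and t' = t'[unfolded abc] and eq = eq[unfolded abc]
  have h: "1 \<le> a" "1 \<le> b" "1 \<le> c" "c \<le> a" "1 \<le> a'" "1 \<le> b'" "1 \<le> c'" "c' \<le> a'"
    using t t' by (auto simp: SQ_def)
  have "a = a'"
    using phiQ_in_block[OF t] phiQ_in_block[OF t'] eq h by (intro block_unique) auto
  then have "(b - 1) * a + (c - 1) = (b' - 1) * a + (c' - 1)"
    using eq h by (auto simp: phiQ_def)
  moreover have "c - 1 < a" "c' - 1 < a" using h \<open>a = a'\<close> by auto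
  ultimately have "b - 1 = b' - 1 \<and> c - 1 = c' - 1" by (intro quotient_remainder_unique)
  then show "t = t'" using abc h \<open>a = a'\<close> by auto
qed

lemma phiQ_surj:
  assumes "1 \<le> n" shows "\<exists>t\<in>SQ q. phiQ q t = n"
proof -
  define a where "a = (LEAST a. n \<le> Lsum q a)"
  have upper: "n \<le> Lsum q a" unfolding a_def by (rule LeastI[of _ n]) (rule Lsum_ge)
  have a: "1 \<le> a" using upper assms by (cases a) auto
  have lower: "Lsum q (a - 1) < n"
    using not_less_Least[of "a - 1" "\<lambda>a. n \<le> Lsum q a"] a unfolding a_def[symmetric] by auto
  define r where "r = n - Lsum q (a - 1) - 1"
  have r: "r < lseq q a * a"
    using Lsum_eq[OF a, of q] upper lower unfolding r_def by (simp add: mult.commute)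
  have "(a, r div a + 1, r mod a + 1) \<in> SQ q"
    using a less_mult_imp_div_less[OF r] by (simp add: SQ_def Suc_leI)
  moreover have "phiQ q (a, r div a + 1, r mod a + 1) = n"
    using lower div_mult_mod_eq[of r a] unfolding phiQ_def r_def by simp
  ultimately show ?thesis by blast
qed

lemma phiQ_ex1: "1 \<le> n \<Longrightarrow> \<exists>!t. t \<in> SQ q \<and> phiQ q t = n"
  using phiQ_surj[of n q] inj_onD[OF inj_on_phiQ] by blast

lemma phiQ_inv: "1 \<le> n \<Longrightarrow> phiQ_inv q n \<in> SQ q \<and> phiQ q (phiQ_inv q n) = n"
  unfolding phiQ_inv_def by (rule theI'[OF phiQ_ex1])

lemma phiQ_inv_phiQ: "t \<in> SQ q \<Longrightarrow> phiQ_inv q (phiQ q t) = t"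
  unfolding phiQ_inv_def by (intro the1_equality[OF phiQ_ex1] phiQ_ge_1) auto

lemma upper_end_lt_1:
  assumes "(1::real) \<le> c" "c \<le> a" shows "(c - 1) / a + 1 / (2 * a ^ 2) < 1"
proof -
  have "(c - 1) / a \<le> (a - 1) / a" using assms by (intro divide_right_mono) auto
  moreover have "(a - 1) / a + 1 / (2 * a ^ 2) < 1"
    using assms by (simp add: field_simps power2_eq_square)
  ultimately show ?thesis by linarith
qed

lemma lower_end_pos:
  assumes "(1::real) \<le> a" "2 \<le> c" shows "0 < (c - 1) / a - 1 / (2 * a ^ 2)"
proof -
  have "1 / a \<le> (c - 1) / a" using assms by (intro divide_right_mono) auto
  moreover have "0 < 1 / a - 1 / (2 * a ^ 2)"
    using assms by (simp add: field_simps power2_eq_square)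
  ultimately show ?thesis by linarith
qed

lemma special_seq_bounds:
  assumes q: "basic_seq q" and F: "special_seq q F" and t: "(a, b, c) \<in> SQ q"
  shows "0 \<le> F (a, b, c) \<and> F (a, b, c) \<le> q (phiQ q (a, b, c)) - 1"
proof -
  have h: "1 \<le> c" "c \<le> a" using t by (auto simp: SQ_def)
  define Q where "Q = real_of_int (q (phiQ q (a, b, c)))"
  have "q (phiQ q (a, b, c)) \<ge> 2" using q phiQ_ge_1[OF t] by (auto simp: basic_seq_def)
  then have Q: "Q > 0" by (simp add: Q_def)
  show ?thesis
  proof (cases "c = 1")
    case True
    then show ?thesis using F t \<open>q (phiQ q (a, b, c)) \<ge> 2\<close> by (auto simp: special_seq_def)
  next
    case False
    then have "real_of_int (F (a, b, c)) / Q \<in> {(real c - 1) / real a - 1 / (2 * real a ^ 2) ..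
        (real c - 1) / real a + 1 / (2 * real a ^ 2)}"
      using F t h by (auto simp: special_seq_def Q_def of_nat_diff)
    then have "0 < real_of_int (F (a, b, c)) / Q \<and> real_of_int (F (a, b, c)) / Q < 1"
      using upper_end_lt_1[of "real c" "real a"] lower_end_pos[of "real a" "real c"] h False
      by auto
    then have "0 < real_of_int (F (a, b, c)) \<and> real_of_int (F (a, b, c)) < Q"
      using Q by (simp add: divide_less_eq zero_less_divide_iff)
    then show ?thesis by (simp add: Q_def)
  qed
qed

lemma admissible_digits_EF:
  assumes "basic_seq q" "special_seq q F" shows "admissible_digits q (EF q F)"
proof (unfold admissible_digits_def EF_def, intro allI impI)
  fix n :: nat
  assume "1 \<le> n"
  then have "phiQ_inv q n \<in> SQ q" "phiQ q (phiQ_inv q n) = n" using phiQ_inv by auto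
  then show "0 \<le> F (phiQ_inv q n) \<and> F (phiQ_inv q n) \<le> q n - 1"
    using special_seq_bounds[OF assms] by (cases "phiQ_inv q n") auto
qed

lemma xF_eq_suminf: "xF q F = suminf (cantor_term q (EF q F))"
  unfolding xF_def cantor_term_def cantor_prod_def by simp

lemma xF_cong:
  assumes "\<forall>t\<in>SQ q. F1 t = F2 t" shows "xF q F1 = xF q F2"
proof -
  have "EF q F1 (n + 1) = EF q F2 (n + 1)" for n
    using assms phiQ_inv[of "n + 1" q] by (simp add: EF_def)
  then have "cantor_term q (EF q F1) = cantor_term q (EF q F2)"
    by (simp add: cantor_term_def fun_eq_iff)
  then show ?thesis by (simp add: xF_eq_suminf)
qed

lemma zetaF_first_difference:
  assumes "t \<in> SQ q" "F1 t \<noteq> F2 t"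
  obtains m where "zetaF q F1 F2 = Suc m" "\<And>k. 1 \<le> k \<Longrightarrow> k \<le> m \<Longrightarrow> EF q F1 k = EF q F2 k"
proof -
  let ?P = "\<lambda>n. 1 \<le> n \<and> EF q F1 n \<noteq> EF q F2 n"
  have "?P (phiQ q t)" using assms phiQ_ge_1[OF assms(1)] by (simp add: EF_def phiQ_inv_phiQ)
  then have "?P (zetaF q F1 F2)" unfolding zetaF_def by (rule LeastI)
  then obtain m where m: "zetaF q F1 F2 = Suc m" by (cases "zetaF q F1 F2") auto
  moreover have "EF q F1 k = EF q F2 k" if "1 \<le> k" "k \<le> m" for k
    using not_less_Least[of k ?P] that m unfolding zetaF_def by auto
  ultimately show thesis by (rule that)
qed

theorem mainTheorem18:
  fixes q :: "nat \<Rightarrow> int" and F1 F2 :: "nat \<times> nat \<times> nat \<Rightarrow> int"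
  assumes "basic_seq q" and "infinite_in_limit q"
    and "F1 \<in> GammaQ q" and "F2 \<in> GammaQ q"
  shows "\<bar>xF q F1 - xF q F2\<bar> \<le> dF q F1 F2"
proof (cases "\<forall>t\<in>SQ q. F1 t = F2 t")
  case True
  then show ?thesis by (simp add: xF_cong dF_def)
next
  case False
  then obtain t where "t \<in> SQ q" "F1 t \<noteq> F2 t" by auto
  then obtain m where m: "zetaF q F1 F2 = Suc m"
    and agree: "\<And>k. 1 \<le> k \<Longrightarrow> k \<le> m \<Longrightarrow> EF q F1 k = EF q F2 k"
    using zetaF_first_difference by blast
  have "admissible_digits q (EF q F1)" "admissible_digits q (EF q F2)"
    using assms(3,4) admissible_digits_EF[OF assms(1)] by (auto simp: GammaQ_def)
  then have "\<bar>xF q F1 - xF q F2\<bar> \<le> 1 / cantor_prod q m"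
    unfolding xF_eq_suminf using agree by (rule cantor_series_diff_le[OF assms(1)])
  then show ?thesis unfolding dF_def if_not_P[OF False] m
    by (simp add: cantor_prod_def atLeastLessThanSuc_atLeastAtMost)
qed

end
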